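(* Let $n\ge2$, let $c=(c_{i,j})$ be an $n\times(n+1)$ matrix with entries in $\{0,1\}$, $\sigma_1,\ldots,\sigma_n>0$, $\gamma_1,\ldots,\gamma_{n+1}>0$. Let $\mathbf{X}=(X_1,\ldots,X_n)'$ have decumulative distribution function \[ \mathbf{P}[X_1>x_1,\ldots,X_n>x_n]=\prod_{j=1}^{n+1}\left(1+\sum_{i=1}^n\frac{c_{i,j}}{\sigma_i}x_i\right)^{-\gamma_j},\quad (x_1,\ldots,x_n)'\in(0,\infty)^n. \] For $1\le k\ne l\le n$ define $\gamma_{c,(k,l)}=\gamma_{c,(l,k)}=\sum_jc_{k,j}c_{l,j}\gamma_j$ (assumed $>0$), $\gamma_{c,k}=\sum_jc_{k,j}(1-c_{l,j})\gamma_j$, $\gamma_{c,l}=\sum_jc_{l,j}(1-c_{k,j})\gamma_j$, $\gamma^\ast_{c,l}=\gamma_{c,l}+\gamma_{c,(k,l)}$, and $m(x)=\frac{\sigma_k}{\gamma_{c,(k,l)}}\left(1+\frac{x}{\sigma_l}\right)$. Then for $x_k,x_l>0$, \[ \mathbf{P}[X_k>x_k\mid X_l=x_l]=\left(\frac{\gamma_{c,(k,l)}}{\gamma^\ast_{c,l}}+\frac{\gamma_{c,l}}{\gamma^\ast_{c,l}}\left(1+\frac{x_k}{\gamma_{c,(k,l)}m(x_l)}\right)\right)\left(1+\frac{x_k}{\sigma_k}\right)^{-\gamma_{c,k}}\left(1+\frac{x_k}{\gamma_{c,(k,l)}m(x_l)}\right)^{-\gamma_{c,(l,k)}-1}. \]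 *)

theory Defs
  imports "HOL-Probability.Probability"
begin

text \<open>Parameters of the multivariate Pareto-type distribution.
  Indices: i ranges over {1..n}, j over {1..n+1}.\<close>

definition gamma_pair :: "nat \<Rightarrow> (nat \<Rightarrow> nat \<Rightarrow> real) \<Rightarrow> (nat \<Rightarrow> real) \<Rightarrow> nat \<Rightarrow> nat \<Rightarrow> real" where
  "gamma_pair n c \<gamma> k l = (\<Sum>j=1..n+1. c k j * c l j * \<gamma> j)"

text \<open>gamma_single n c gamma k l is gamma_{c,k} in the context of the pair (k,l).\<close>
definition gamma_single :: "nat \<Rightarrow> (nat \<Rightarrow> nat \<Rightarrow> real) \<Rightarrow> (nat \<Rightarrow> real) \<Rightarrow> nat \<Rightarrow> nat \<Rightarrow> real" where
  "gamma_single n c \<gamma> k l = (\<Sum>j=1..n+1. c k j * (1 - c l j) * \<gamma> j)"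

end

theory Submission
  imports Defs
begin

text \<open>The tail formula, assumed at positive points only, extends by continuity from below to
  nonnegative points. As the \<open>X\<^sub>i\<close> are almost surely positive, setting every coordinate
  other than \<open>k\<close> and \<open>l\<close> to \<open>0\<close> yields the joint tail of \<open>(X\<^sub>k, X\<^sub>l)\<close>,
  \<open>(1 + a/\<sigma>\<^sub>k)^(-\<gamma>\<^sub>k) (1 + a/\<sigma>\<^sub>k + b/\<sigma>\<^sub>l)^(-\<gamma>\<^sub>k\<^sub>l) (1 + b/\<sigma>\<^sub>l)^(-\<gamma>\<^sub>l)\<close>.
  Minus its derivative in \<open>b\<close> is the density of \<open>X\<^sub>l\<close> on the event \<open>X\<^sub>k > a\<close>, and the
  conditional probability is the ratio of this density to the one for \<open>a = 0\<close>.\<close>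

lemma prod_powr_minus: "(x::real) \<noteq> 0 \<Longrightarrow> (\<Prod>j\<in>A. x powr - f j) = x powr - sum f A"
  by (simp add: powr_sum sum_negf[symmetric])

lemma powr_minus_le_1: "1 \<le> (x::real) \<Longrightarrow> 0 \<le> p \<Longrightarrow> x powr - p \<le> 1"
  using powr_mono2'[of "- p" 1 x] by simp

lemma (in prob_space) sigma_finite_subalgebra_vimage_algebra:
  assumes "Y \<in> measurable M N"
  shows "sigma_finite_subalgebra M (vimage_algebra (space M) Y N)"
proof (rule finite_measure_subalgebra_is_sigma_finite)
  show "finite_measure_subalgebra M (vimage_algebra (space M) Y N)"
    unfolding finite_measure_subalgebra_def finite_measure_subalgebra_axioms_def subalgebra_def
    using assms measurable_sets[OF assms] measurable_space[OF assms]
    by (auto intro: finite_measure_axioms simp: sets_vimage_algebra2[of Y])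
qed

lemma (in prob_space) real_cond_exp_indicator_density_ratio:
  fixes Y :: "'a \<Rightarrow> real" and f h :: "real \<Rightarrow> real"
  assumes [measurable]: "Y \<in> borel_measurable M" "A \<in> sets M"
    "f \<in> borel_measurable borel" "h \<in> borel_measurable borel"
    and f_nonneg: "\<And>y. 0 \<le> f y" and fh_nonneg: "\<And>y. 0 \<le> f y * h y"
    and h_bounded: "AE \<omega> in M. \<bar>h (Y \<omega>)\<bar> \<le> B"
    and distr_Y: "distr M borel Y = density lborel f"
    and distr_A_Y: "distr (density M (indicator A)) borel Y = density lborel (\<lambda>y. f y * h y)"
  shows "AE \<omega> in M. real_cond_exp M (vimage_algebra (space M) Y borel) (indicator A) \<omega> = h (Y \<omega>)"
proof -
  let ?F = "vimage_algebra (space M) Y borel"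
  interpret sigma_finite_subalgebra M ?F
    by (rule sigma_finite_subalgebra_vimage_algebra) measurable
  have restrict_A: "density M (indicator A) = density M (\<lambda>\<omega>. ennreal (indicator A \<omega>))"
    by (simp add: ennreal_indicator)
  show ?thesis
  proof (rule real_cond_exp_charact)
    fix E assume "E \<in> sets ?F"
    then obtain B where B[measurable]: "B \<in> sets borel" and E: "E = Y -` B \<inter> space M"
      by (auto simp: sets_vimage_algebra2)
    have "(\<integral>\<omega>\<in>E. indicator A \<omega> \<partial>M) = (\<integral>\<omega>. indicator A \<omega> * (indicator B (Y \<omega>) :: real) \<partial>M)"
      unfolding set_lebesgue_integral_def E
      by (intro Bochner_Integration.integral_cong) (auto split: split_indicator)
    also have "\<dots> = (\<integral>\<omega>. indicator B (Y \<omega>) \<partial>density M (indicator A))"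
      unfolding restrict_A by (subst integral_density) auto
    also have "\<dots> = (\<integral>y. indicator B y \<partial>distr (density M (indicator A)) borel Y)"
      by (subst integral_distr) auto
    also have "\<dots> = (\<integral>y. f y * (indicator B y * h y) \<partial>lborel)"
      unfolding distr_A_Y using fh_nonneg by (subst integral_density) (auto simp: mult_ac)
    also have "\<dots> = (\<integral>y. indicator B y * h y \<partial>distr M borel Y)"
      unfolding distr_Y using f_nonneg by (subst integral_density) auto
    also have "\<dots> = (\<integral>\<omega>\<in>E. h (Y \<omega>) \<partial>M)"
      unfolding set_lebesgue_integral_def E
      by (subst integral_distr) (auto intro!: Bochner_Integration.integral_cong split: split_indicator)
    finally show "(\<integral>\<omega>\<in>E. indicator A \<omega> \<partial>M) = (\<integral>\<omega>\<in>E. h (Y \<omega>) \<partial>M)" .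
  next
    show "integrable M (\<lambda>\<omega>. h (Y \<omega>))"
      using h_bounded by (intro integrable_const_bound[where B=B]) auto
    show "(\<lambda>\<omega>. h (Y \<omega>)) \<in> borel_measurable ?F"
      by (rule measurable_compose[OF measurable_vimage_algebra1]) auto
  qed (auto intro!: integrable_real_indicator simp: less_top[symmetric])
qed

lemma (in finite_measure) measure_joint_tail_right_limit:
  fixes X :: "'a \<Rightarrow> 'i \<Rightarrow> real"
  assumes "finite I" and [measurable]: "\<And>i. i \<in> I \<Longrightarrow> (\<lambda>\<omega>. X \<omega> i) \<in> borel_measurable M"
  shows "(\<lambda>m. measure M {\<omega> \<in> space M. \<forall>i\<in>I. X \<omega> i > t i + 1 / Suc m})
    \<longlonglongrightarrow> measure M {\<omega> \<in> space M. \<forall>i\<in>I. X \<omega> i > t i}"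
proof -
  define A where "A m = {\<omega> \<in> space M. \<forall>i\<in>I. X \<omega> i > t i + 1 / Suc m}" for m
  have A_sets: "range A \<subseteq> sets M"
    unfolding A_def using \<open>finite I\<close> by auto
  have A_inc: "incseq A"
  proof (rule monoI)
    fix m m' :: nat assume "m \<le> m'"
    then have "1 / real (Suc m') \<le> 1 / Suc m" by (simp add: frac_le)
    then show "A m \<subseteq> A m'" unfolding A_def by force
  qed
  have Union_A: "(\<Union>m. A m) = {\<omega> \<in> space M. \<forall>i\<in>I. X \<omega> i > t i}"
  proof (intro equalityI subsetI)
    fix \<omega> assume "\<omega> \<in> {\<omega> \<in> space M. \<forall>i\<in>I. X \<omega> i > t i}"
    have "\<forall>\<^sub>F m in sequentially. t i + 1 / Suc m < X \<omega> i" if "i \<in> I" for i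
    proof -
      have "0 < X \<omega> i - t i" using \<open>\<omega> \<in> _\<close> that by auto
      from order_tendstoD(2)[OF LIMSEQ_Suc[OF lim_1_over_n] this] show ?thesis
        by eventually_elim simp
    qed
    then have "\<forall>\<^sub>F m in sequentially. \<forall>i\<in>I. t i + 1 / Suc m < X \<omega> i"
      using \<open>finite I\<close> by (simp add: eventually_ball_finite_distrib)
    then obtain m where "\<forall>i\<in>I. t i + 1 / Suc m < X \<omega> i"
      using eventually_sequentially by auto
    then show "\<omega> \<in> (\<Union>m. A m)"
      using \<open>\<omega> \<in> _\<close> by (auto simp: A_def)
  qed (auto simp: A_def intro: add_pos_pos order.strict_trans[rotated])
  from finite_Lim_measure_incseq[OF A_sets A_inc] show ?thesis
    unfolding Union_A unfolding A_def .
qed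

lemma emeasure_density_greaterThan_FTC:
  fixes F d :: "real \<Rightarrow> real"
  assumes [measurable]: "d \<in> borel_measurable borel"
    and deriv: "\<And>y. y0 \<le> y \<Longrightarrow> ((\<lambda>y. - F y) has_real_derivative d y) (at y)"
    and nonneg: "\<And>y. y0 \<le> y \<Longrightarrow> 0 \<le> d y"
    and lim: "(F \<longlongrightarrow> 0) at_top"
  shows "emeasure (density lborel (\<lambda>y. d y * indicator {y0<..} y)) {b<..} = F (max b y0)"
proof -
  have "emeasure (density lborel (\<lambda>y. d y * indicator {y0<..} y)) {b<..}
      = (\<integral>\<^sup>+y. ennreal (d y) * indicator {max b y0..} y \<partial>lborel)"
    using AE_lborel_singleton[of "max b y0"]
    by (subst emeasure_density)
       (auto intro!: nn_integral_cong_AE elim!: eventually_mono split: split_indicator)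
  also have "\<dots> = ennreal (0 - - F (max b y0))"
    using tendsto_minus[OF lim] by (intro nn_integral_FTC_atLeast deriv nonneg) auto
  finally show ?thesis by simp
qed

lemma gamma_pair_commute: "gamma_pair n c \<gamma> l k = gamma_pair n c \<gamma> k l"
  unfolding gamma_pair_def by (simp add: mult_ac)

locale multivariate_pareto = prob_space M for M :: "'a measure" +
  fixes X :: "'a \<Rightarrow> nat \<Rightarrow> real"
    and n :: nat and c :: "nat \<Rightarrow> nat \<Rightarrow> real"
    and \<sigma> :: "nat \<Rightarrow> real" and \<gamma> :: "nat \<Rightarrow> real"
  assumes c_01: "\<And>i j. i \<in> {1..n} \<Longrightarrow> j \<in> {1..n+1} \<Longrightarrow> c i j \<in> {0, 1}"
    and \<sigma>_pos: "\<And>i. i \<in> {1..n} \<Longrightarrow> \<sigma> i > 0"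
    and \<gamma>_pos: "\<And>j. j \<in> {1..n+1} \<Longrightarrow> \<gamma> j > 0"
    and X_measurable[measurable]: "\<And>i. i \<in> {1..n} \<Longrightarrow> (\<lambda>\<omega>. X \<omega> i) \<in> borel_measurable M"
    and joint_tail: "\<And>x. (\<forall>i\<in>{1..n}. x i > 0) \<Longrightarrow>
           measure M {\<omega> \<in> space M. \<forall>i\<in>{1..n}. X \<omega> i > x i}
           = (\<Prod>j=1..n+1. (1 + (\<Sum>i=1..n. c i j / \<sigma> i * x i)) powr (- \<gamma> j))"
begin

definition pareto_tail :: "(nat \<Rightarrow> real) \<Rightarrow> real" where
  "pareto_tail x = (\<Prod>j=1..n+1. (1 + (\<Sum>i=1..n. c i j / \<sigma> i * x i)) powr (- \<gamma> j))"

lemma pareto_tail_base_ge_1: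
  assumes "\<forall>i\<in>{1..n}. 0 \<le> x i" "j \<in> {1..n+1}"
  shows "1 \<le> 1 + (\<Sum>i=1..n. c i j / \<sigma> i * x i)"
proof -
  have "0 \<le> c i j / \<sigma> i * x i" if "i \<in> {1..n}" for i
    using assms c_01[OF that assms(2)] \<sigma>_pos[OF that] that by auto
  then show ?thesis by (simp only: le_add_same_cancel1 sum_nonneg)
qed

lemma measure_joint_tail_nonneg:
  assumes x: "\<forall>i\<in>{1..n}. 0 \<le> x i"
  shows "measure M {\<omega> \<in> space M. \<forall>i\<in>{1..n}. X \<omega> i > x i} = pareto_tail x"
proof (rule LIMSEQ_unique[OF measure_joint_tail_right_limit])
  have "measure M {\<omega> \<in> space M. \<forall>i\<in>{1..n}. X \<omega> i > x i + 1 / Suc m}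
      = pareto_tail (\<lambda>i. x i + 1 / Suc m)" for m
    unfolding pareto_tail_def using x by (intro joint_tail) (auto intro: add_nonneg_pos)
  moreover have "(\<lambda>m. pareto_tail (\<lambda>i. x i + 1 / Suc m)) \<longlonglongrightarrow> pareto_tail x"
    unfolding pareto_tail_def
  proof (intro tendsto_prod tendsto_powr tendsto_add tendsto_sum tendsto_mult tendsto_const)
    show "(\<lambda>m. x i + 1 / Suc m) \<longlonglongrightarrow> x i" for i
      using tendsto_add[OF tendsto_const LIMSEQ_Suc[OF lim_1_over_n]] by simp
  next
    fix j assume "j \<in> {1..n+1}"
    then show "1 + (\<Sum>i=1..n. c i j / \<sigma> i * x i) \<noteq> 0"
      using pareto_tail_base_ge_1[OF x] by fastforce
  qed
  ultimately show "(\<lambda>m. measure M {\<omega> \<in> space M. \<forall>i\<in>{1..n}. X \<omega> i > x i + 1 / Suc m})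
      \<longlonglongrightarrow> pareto_tail x"
    by simp
qed auto

lemma AE_X_pos: "AE \<omega> in M. \<forall>i\<in>{1..n}. X \<omega> i > 0"
proof -
  have "prob {\<omega> \<in> space M. \<forall>i\<in>{1..n}. X \<omega> i > 0} = 1"
    using measure_joint_tail_nonneg[of "\<lambda>_. 0"] by (simp add: pareto_tail_def)
  from AE_prob_1[OF this] show ?thesis by simp
qed

lemma gamma_single_nonneg:
  assumes "k \<in> {1..n}" "l \<in> {1..n}"
  shows "0 \<le> gamma_single n c \<gamma> k l"
  unfolding gamma_single_def
proof (rule sum_nonneg)
  fix j assume "j \<in> {1..n+1}"
  then have "0 \<le> c k j" "0 \<le> 1 - c l j" "0 < \<gamma> j"
    using c_01[OF assms(1) \<open>j \<in> _\<close>] c_01[OF assms(2) \<open>j \<in> _\<close>] \<gamma>_pos[OF \<open>j \<in> _\<close>] by auto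
  then show "0 \<le> c k j * (1 - c l j) * \<gamma> j" by simp
qed

end

locale pareto_pair = multivariate_pareto +
  fixes k l :: nat
  assumes k_in: "k \<in> {1..n}" and l_in: "l \<in> {1..n}" and k_ne_l: "k \<noteq> l"
    and gamma_pair_pos: "gamma_pair n c \<gamma> k l > 0"
begin

abbreviation "gkl \<equiv> gamma_pair n c \<gamma> k l"
abbreviation "gk \<equiv> gamma_single n c \<gamma> k l"
abbreviation "gl \<equiv> gamma_single n c \<gamma> l k"

lemma \<sigma>_k_pos: "\<sigma> k > 0" and \<sigma>_l_pos: "\<sigma> l > 0"
  using \<sigma>_pos k_in l_in by auto

lemma gk_nonneg: "0 \<le> gk" and gl_nonneg: "0 \<le> gl"
  using gamma_single_nonneg k_in l_in by auto

definition pair_tail :: "real \<Rightarrow> real \<Rightarrow> real" where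
  "pair_tail a b = (1 + a / \<sigma> k) powr (- gk) * (1 + a / \<sigma> k + b / \<sigma> l) powr (- gkl)
                   * (1 + b / \<sigma> l) powr (- gl)"

lemma pareto_tail_pair:
  assumes "0 \<le> a" "0 \<le> b"
  shows "pareto_tail (\<lambda>i. if i = k then a else if i = l then b else 0) = pair_tail a b"
proof -
  let ?A = "1 + a / \<sigma> k" and ?B = "1 + b / \<sigma> l" and ?AB = "1 + a / \<sigma> k + b / \<sigma> l"
  have pos: "0 < ?A" "0 < ?B" "0 < ?AB"
    using assms \<sigma>_k_pos \<sigma>_l_pos by (auto intro!: add_pos_nonneg)
  \<comment> \<open>Factor \<open>j\<close> feeds exactly one of the three powers, selected by \<open>(c k j, c l j) \<in> {0,1}\<^sup>2\<close>.\<close>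
  have factor: "(1 + (\<Sum>i=1..n. c i j / \<sigma> i * (if i = k then a else if i = l then b else 0))) powr (- \<gamma> j)
      = ?A powr (- (c k j * (1 - c l j) * \<gamma> j)) * ?AB powr (- (c k j * c l j * \<gamma> j))
        * ?B powr (- (c l j * (1 - c k j) * \<gamma> j))" if "j \<in> {1..n+1}" for j
  proof -
    have "(\<Sum>i=1..n. c i j / \<sigma> i * (if i = k then a else if i = l then b else 0))
        = c k j * (a / \<sigma> k) + c l j * (b / \<sigma> l)"
      using k_in l_in k_ne_l by (simp add: if_distrib sum.If_cases sum.delta)
    moreover have "c k j \<in> {0, 1}" "c l j \<in> {0, 1}"
      using c_01 k_in l_in that by auto
    ultimately show ?thesis using pos by (auto simp: add.assoc)
  qed
  have "pareto_tail (\<lambda>i. if i = k then a else if i = l then b else 0)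
      = (\<Prod>j=1..n+1. ?A powr (- (c k j * (1 - c l j) * \<gamma> j)))
        * (\<Prod>j=1..n+1. ?AB powr (- (c k j * c l j * \<gamma> j)))
        * (\<Prod>j=1..n+1. ?B powr (- (c l j * (1 - c k j) * \<gamma> j)))"
    unfolding pareto_tail_def prod.distrib[symmetric] by (rule prod.cong[OF refl factor])
  also have "\<dots> = pair_tail a b"
    unfolding pair_tail_def gamma_single_def gamma_pair_def using pos
    by (simp only: prod_powr_minus)
  finally show ?thesis .
qed

lemma X_k_measurable[measurable]: "(\<lambda>\<omega>. X \<omega> k) \<in> borel_measurable M"
  and X_l_measurable[measurable]: "(\<lambda>\<omega>. X \<omega> l) \<in> borel_measurable M"
  using k_in l_in by simp_all

lemma prob_pair_tail:
  assumes "0 \<le> a"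
  shows "prob {\<omega> \<in> space M. X \<omega> k > a \<and> X \<omega> l > b} = pair_tail a (max b 0)"
proof -
  \<comment> \<open>The other coordinates are almost surely positive, so requiring \<open>X\<^sub>i > 0\<close> for them costs nothing.\<close>
  let ?x = "\<lambda>i. if i = k then a else if i = l then max b 0 else 0"
  have "prob {\<omega> \<in> space M. X \<omega> k > a \<and> X \<omega> l > b}
      = prob {\<omega> \<in> space M. \<forall>i\<in>{1..n}. X \<omega> i > ?x i}"
  proof (rule measure_eq_AE)
    show "AE \<omega> in M. (\<omega> \<in> {\<omega> \<in> space M. X \<omega> k > a \<and> X \<omega> l > b})
        = (\<omega> \<in> {\<omega> \<in> space M. \<forall>i\<in>{1..n}. X \<omega> i > ?x i})"
      using AE_X_pos by eventually_elim (use k_in l_in k_ne_l assms in auto)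
  qed auto
  also have "\<dots> = pair_tail a (max b 0)"
    using assms by (subst measure_joint_tail_nonneg) (auto simp: pareto_tail_pair)
  finally show ?thesis .
qed

definition pair_density :: "real \<Rightarrow> real \<Rightarrow> real" where
  "pair_density a y = (1 + a / \<sigma> k) powr (- gk) * (1 + a / \<sigma> k + y / \<sigma> l) powr (- gkl - 1)
     * (1 + y / \<sigma> l) powr (- gl - 1) * (gkl * (1 + y / \<sigma> l) + gl * (1 + a / \<sigma> k + y / \<sigma> l)) / \<sigma> l"

lemma pair_density_measurable[measurable]: "pair_density a \<in> borel_measurable borel"
  unfolding pair_density_def by measurable

lemma pair_density_nonneg: "0 \<le> a \<Longrightarrow> 0 \<le> y \<Longrightarrow> 0 \<le> pair_density a y"
  unfolding pair_density_def using gk_nonneg gl_nonneg gamma_pair_pos \<sigma>_k_pos \<sigma>_l_pos by simp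

lemma pair_tail_has_derivative:
  assumes "0 \<le> a" "0 \<le> y"
  shows "((\<lambda>y. - pair_tail a y) has_real_derivative pair_density a y) (at y)"
proof -
  let ?A = "1 + a / \<sigma> k" and ?u = "1 + a / \<sigma> k + y / \<sigma> l" and ?v = "1 + y / \<sigma> l"
  have pos: "0 < ?A" "0 < ?u" "0 < ?v"
    using assms \<sigma>_k_pos \<sigma>_l_pos by (auto intro!: add_pos_nonneg)
  have u: "?u powr - gkl = ?u * ?u powr (- gkl - 1)" and v: "?v powr - gl = ?v * ?v powr (- gl - 1)"
    using powr_add[of ?u "- gkl - 1" 1] powr_add[of ?v "- gl - 1" 1] pos by simp_all
  have "((\<lambda>y. - pair_tail a y) has_real_derivative
      (gkl * ?u powr (- gkl - 1) * ?v powr - gl + gl * ?u powr - gkl * ?v powr (- gl - 1))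
        * ?A powr - gk / \<sigma> l) (at y)"
    unfolding pair_tail_def using pos \<sigma>_l_pos
    by (auto intro!: derivative_eq_intros DERIV_fun_powr simp: field_simps)
  moreover have "(gkl * ?u powr (- gkl - 1) * ?v powr - gl + gl * ?u powr - gkl * ?v powr (- gl - 1))
        * ?A powr - gk / \<sigma> l = pair_density a y"
    unfolding pair_density_def u v by (simp add: algebra_simps)
  ultimately show ?thesis by simp
qed

lemma pair_tail_tendsto_0:
  assumes "0 \<le> a"
  shows "(pair_tail a \<longlongrightarrow> 0) at_top"
proof (rule tendsto_sandwich[where f = "\<lambda>_. 0"])
  let ?A = "1 + a / \<sigma> k" and ?u = "\<lambda>y. 1 + a / \<sigma> k + y / \<sigma> l"
  have "filterlim (\<lambda>y. inverse (\<sigma> l) * y) at_top at_top"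
    using \<sigma>_l_pos by (intro filterlim_tendsto_pos_mult_at_top[OF tendsto_const] filterlim_ident) auto
  then have "filterlim ?u at_top at_top"
    by (intro filterlim_tendsto_add_at_top[OF tendsto_const]) (simp add: field_simps)
  then have "((\<lambda>y. ?u y powr - gkl) \<longlongrightarrow> 0) at_top"
    using gamma_pair_pos by (intro tendsto_neg_powr) auto
  then show "((\<lambda>y. ?A powr - gk * ?u y powr - gkl) \<longlongrightarrow> 0) at_top"
    by (rule tendsto_mult_right_zero)
  show "\<forall>\<^sub>F y in at_top. pair_tail a y \<le> ?A powr - gk * ?u y powr - gkl"
    using eventually_ge_at_top[of 0]
  proof eventually_elim
    case (elim y)
    then have "(1 + y / \<sigma> l) powr - gl \<le> 1"
      using \<sigma>_l_pos gl_nonneg by (intro powr_minus_le_1) auto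
    then show ?case
      unfolding pair_tail_def by (simp add: mult_left_le)
  qed
qed (simp_all add: pair_tail_def)

lemma emeasure_pair_density_greaterThan:
  assumes "0 \<le> a"
  shows "emeasure (density lborel (\<lambda>y. pair_density a y * indicator {0<..} y)) {b<..}
    = pair_tail a (max b 0)"
  using assms
  by (intro emeasure_density_greaterThan_FTC pair_tail_has_derivative pair_density_nonneg
      pair_tail_tendsto_0) auto

lemma vimage_X_l_greaterThan: "(\<lambda>\<omega>. X \<omega> l) -` {b<..} \<inter> space M = {\<omega> \<in> space M. X \<omega> l > b}"
  by auto

lemma distr_X_l: "distr M borel (\<lambda>\<omega>. X \<omega> l)
    = density lborel (\<lambda>y. pair_density 0 y * indicator {0<..} y)"
proof (rule measure_eqI_lessThan)
  fix b
  have "prob {\<omega> \<in> space M. X \<omega> l > b} = prob {\<omega> \<in> space M. X \<omega> k > 0 \<and> X \<omega> l > b}"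
    using AE_X_pos k_in by (intro measure_eq_AE) auto
  then have "emeasure (distr M borel (\<lambda>\<omega>. X \<omega> l)) {b<..} = pair_tail 0 (max b 0)"
    by (simp add: emeasure_distr vimage_X_l_greaterThan emeasure_eq_measure prob_pair_tail)
  then show "emeasure (distr M borel (\<lambda>\<omega>. X \<omega> l)) {b<..}
      = emeasure (density lborel (\<lambda>y. pair_density 0 y * indicator {0<..} y)) {b<..}"
    and "emeasure (distr M borel (\<lambda>\<omega>. X \<omega> l)) {b<..} < \<infinity>"
    by (simp_all add: emeasure_pair_density_greaterThan)
qed auto

lemma distr_tail_X_l:
  assumes "0 \<le> a"
  shows "distr (density M (indicator {\<omega> \<in> space M. X \<omega> k > a})) borel (\<lambda>\<omega>. X \<omega> l)
    = density lborel (\<lambda>y. pair_density a y * indicator {0<..} y)"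
proof (rule measure_eqI_lessThan)
  fix b
  let ?\<mu> = "distr (density M (indicator {\<omega> \<in> space M. X \<omega> k > a})) borel (\<lambda>\<omega>. X \<omega> l)"
  have "{\<omega> \<in> space M. X \<omega> k > a} \<inter> {\<omega> \<in> space M. X \<omega> l > b}
      = {\<omega> \<in> space M. X \<omega> k > a \<and> X \<omega> l > b}"
    by auto
  then have "emeasure ?\<mu> {b<..} = pair_tail a (max b 0)"
    using assms by (simp add: emeasure_distr vimage_X_l_greaterThan emeasure_restricted
        emeasure_eq_measure prob_pair_tail)
  then show "emeasure ?\<mu> {b<..}
      = emeasure (density lborel (\<lambda>y. pair_density a y * indicator {0<..} y)) {b<..}"
    and "emeasure ?\<mu> {b<..} < \<infinity>"
    using assms by (simp_all add: emeasure_pair_density_greaterThan)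
qed auto

text \<open>With the paper's \<open>m(y) = \<sigma>\<^sub>k / \<gamma>\<^sub>k\<^sub>l (1 + y/\<sigma>\<^sub>l)\<close>, the quantity \<open>w\<close> below is
  \<open>1 + a / (\<gamma>\<^sub>k\<^sub>l m(y))\<close>.\<close>

definition cond_tail :: "real \<Rightarrow> real \<Rightarrow> real" where
  "cond_tail a y = (let w = 1 + a / (\<sigma> k * (1 + y / \<sigma> l))
     in (gkl / (gl + gkl) + gl / (gl + gkl) * w) * (1 + a / \<sigma> k) powr - gk * w powr (- gkl - 1))"

lemma cond_tail_measurable[measurable]: "cond_tail a \<in> borel_measurable borel"
  unfolding cond_tail_def Let_def by measurable

lemma pair_density_ratio:
  assumes "0 \<le> a" "0 \<le> y"
  shows "pair_density 0 y * cond_tail a y = pair_density a y"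
proof -
  define u v where "u = 1 + a / \<sigma> k + y / \<sigma> l" and "v = 1 + y / \<sigma> l"
  have pos: "0 < u" "0 < v"
    using assms \<sigma>_k_pos \<sigma>_l_pos by (auto simp: u_def v_def intro!: add_pos_nonneg)
  have u: "u = v + a / \<sigma> k"
    by (simp add: u_def v_def)
  have w: "1 + a / (\<sigma> k * v) = u / v"
    using pos \<sigma>_k_pos unfolding u by (simp add: field_simps)
  have s: "0 < gl + gkl" using gl_nonneg gamma_pair_pos by linarith
  have "(gkl / (gl + gkl) + gl / (gl + gkl) * (u / v)) * (gkl * v + gl * v)
      = (gkl + gl * (u / v)) / (gl + gkl) * (gl + gkl) * v"
    by (simp add: algebra_simps add_divide_distrib)
  also have "\<dots> = (gkl + gl * (u / v)) * v"
    using s by simp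
  also have "\<dots> = gkl * v + gl * u"
    using pos by (simp add: field_simps)
  finally have mix:
    "(gkl / (gl + gkl) + gl / (gl + gkl) * (u / v)) * (gkl * v + gl * v) = gkl * v + gl * u" .
  have powr_cancel: "v powr (- gkl - 1) * (u / v) powr (- gkl - 1) = u powr (- gkl - 1)"
    using pos by (simp add: powr_divide)
  have "pair_density 0 y * cond_tail a y
      = (v powr (- gkl - 1) * (u / v) powr (- gkl - 1)) * v powr (- gl - 1)
        * ((gkl / (gl + gkl) + gl / (gl + gkl) * (u / v)) * (gkl * v + gl * v))
        * (1 + a / \<sigma> k) powr - gk / \<sigma> l"
    by (simp add: pair_density_def cond_tail_def w flip: v_def)
  also have "\<dots> = pair_density a y"
    unfolding mix powr_cancel by (simp add: pair_density_def mult_ac flip: u_def v_def)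
  finally show ?thesis .
qed

lemma cond_tail_bounds:
  assumes "0 \<le> a" "0 \<le> y"
  shows "0 \<le> cond_tail a y" "cond_tail a y \<le> 1"
proof -
  define w where "w = 1 + a / (\<sigma> k * (1 + y / \<sigma> l))"
  define mix where "mix = gkl / (gl + gkl) + gl / (gl + gkl) * w"
  have w: "1 \<le> w"
    using assms \<sigma>_k_pos \<sigma>_l_pos by (simp add: w_def)
  have s: "0 < gl + gkl" using gl_nonneg gamma_pair_pos by linarith
  have mix_nonneg: "0 \<le> mix"
    unfolding mix_def using s gl_nonneg gamma_pair_pos w by simp
  have "mix \<le> gkl / (gl + gkl) * w + gl / (gl + gkl) * w"
    unfolding mix_def using mult_left_mono[OF w, of "gkl / (gl + gkl)"] s gamma_pair_pos by simp
  also have "\<dots> = w"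
    unfolding distrib_right[symmetric] add_divide_distrib[symmetric] using s by (simp add: add.commute)
  finally have "mix * w powr (- gkl - 1) \<le> w * w powr (- gkl - 1)"
    by (simp add: mult_right_mono)
  also have "\<dots> = w powr - gkl"
    using powr_add[of w "- gkl - 1" 1] w by simp
  also have "\<dots> \<le> 1"
    using w gamma_pair_pos by (intro powr_minus_le_1) auto
  finally have mix_le: "mix * w powr (- gkl - 1) \<le> 1" .
  have A_le: "(1 + a / \<sigma> k) powr - gk \<le> 1"
    using assms \<sigma>_k_pos gk_nonneg by (intro powr_minus_le_1) auto
  have eq: "cond_tail a y = (1 + a / \<sigma> k) powr - gk * (mix * w powr (- gkl - 1))"
    by (simp add: cond_tail_def Let_def mix_def w_def mult_ac)
  show "cond_tail a y \<le> 1"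
    unfolding eq using mix_nonneg by (intro mult_le_one[OF A_le _ mix_le]) simp
  show "0 \<le> cond_tail a y"
    unfolding eq using mix_nonneg by simp
qed

lemma real_cond_exp_tail:
  assumes "0 \<le> a"
  shows "AE \<omega> in M. real_cond_exp M (vimage_algebra (space M) (\<lambda>\<omega>. X \<omega> l) borel)
      (indicator {\<omega> \<in> space M. X \<omega> k > a}) \<omega> = cond_tail a (X \<omega> l)"
proof (rule real_cond_exp_indicator_density_ratio)
  show "AE \<omega> in M. \<bar>cond_tail a (X \<omega> l)\<bar> \<le> 1"
    using AE_X_pos by eventually_elim (use cond_tail_bounds assms l_in in fastforce)
  show "distr M borel (\<lambda>\<omega>. X \<omega> l) = density lborel (\<lambda>y. pair_density 0 y * indicator {0<..} y)"
    by (rule distr_X_l)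
  have density_eq: "(\<lambda>y. pair_density 0 y * indicator {0<..} y * cond_tail a y)
      = (\<lambda>y. pair_density a y * indicator {0<..} y)"
    using pair_density_ratio[OF assms] by (auto split: split_indicator)
  show "distr (density M (indicator {\<omega> \<in> space M. X \<omega> k > a})) borel (\<lambda>\<omega>. X \<omega> l)
      = density lborel (\<lambda>y. pair_density 0 y * indicator {0<..} y * cond_tail a y)"
    by (simp only: density_eq[THEN fun_cong] distr_tail_X_l[OF assms])
  show "0 \<le> pair_density 0 y * indicator {0<..} y * cond_tail a y" for y
    unfolding density_eq[THEN fun_cong]
    using pair_density_nonneg[OF assms] by (auto split: split_indicator)
qed (use pair_density_nonneg in \<open>auto split: split_indicator\<close>)

end

theorem theorem3p2:
  fixes M :: "'a measure" and X :: "'a \<Rightarrow> nat \<Rightarrow> real"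
    and n :: nat and c :: "nat \<Rightarrow> nat \<Rightarrow> real"
    and \<sigma> :: "nat \<Rightarrow> real" and \<gamma> :: "nat \<Rightarrow> real" and k l :: nat
  assumes "prob_space M"
    and "n \<ge> 2"
    and "\<And>i j. i \<in> {1..n} \<Longrightarrow> j \<in> {1..n+1} \<Longrightarrow> c i j \<in> {0, 1}"
    and "\<And>i. i \<in> {1..n} \<Longrightarrow> \<sigma> i > 0"
    and "\<And>j. j \<in> {1..n+1} \<Longrightarrow> \<gamma> j > 0"
    and "\<And>i. i \<in> {1..n} \<Longrightarrow> (\<lambda>\<omega>. X \<omega> i) \<in> borel_measurable M"
    and "\<And>x. (\<forall>i\<in>{1..n}. x i > 0) \<Longrightarrow>
           measure M {\<omega> \<in> space M. \<forall>i\<in>{1..n}. X \<omega> i > x i}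
           = (\<Prod>j=1..n+1. (1 + (\<Sum>i=1..n. c i j / \<sigma> i * x i)) powr (- \<gamma> j))"
    and "k \<in> {1..n}" and "l \<in> {1..n}" and "k \<noteq> l"
    and "gamma_pair n c \<gamma> k l > 0"
  shows "\<forall>xk > 0. AE \<omega> in M.
     real_cond_exp M (vimage_algebra (space M) (\<lambda>\<omega>. X \<omega> l) borel)
        (indicator {\<omega> \<in> space M. X \<omega> k > xk}) \<omega>
     = (let gkl = gamma_pair n c \<gamma> k l;
            glk = gamma_pair n c \<gamma> l k;
            gk = gamma_single n c \<gamma> k l;
            gl = gamma_single n c \<gamma> l k;
            gls = gl + gkl;
            xl = X \<omega> l;
            m = \<sigma> k / gkl * (1 + xl / \<sigma> l)
        in (gkl / gls + gl / gls * (1 + xk / (gkl * m)))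
           * (1 + xk / \<sigma> k) powr (- gk)
           * (1 + xk / (gkl * m)) powr (- glk - 1))"
proof -
  \<comment> \<open>The hypothesis \<open>n \<ge> 2\<close> is implied by \<open>k \<noteq> l\<close> and not needed.\<close>
  interpret pareto_pair M X n c \<sigma> \<gamma> k l
    using assms unfolding pareto_pair_def pareto_pair_axioms_def
      multivariate_pareto_def multivariate_pareto_axioms_def by blast
  have scale: "gkl * (\<sigma> k / gkl * t) = \<sigma> k * t" for t
    using gamma_pair_pos by simp
  show ?thesis
    using real_cond_exp_tail less_imp_le
    unfolding cond_tail_def Let_def scale gamma_pair_commute[of n c \<gamma> l k] by blast
qed

end
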